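(* Let $k\ge2$ and $\Delta\ge 2^{4^k+1}$ be integers. Let $Q=\{Q_1,\dots,Q_\Delta\}$ be an arbitrary multiset in $h_1(\Delta)$ (as defined in the context). Then there is a unique element $P_\infty\in Q$ that has multiplicity at least $\Delta-2^{4^k}$ in $Q$ and contains the trit sequence $11\dots1$ (of length $k$).
   Context: A trit sequence of length $k$ is a word $a_1\dots a_k$ with $a_j\in\{0,1,2\}$; it "has an $i$ at position $j$" if $a_j=i$. $h_1(\Delta)$ is the set of all multisets $\{W_1,\dots,W_\Delta\}$ (of cardinality $\Delta$) of sets $W_i$ of trit sequences of length $k$ such that (A) for any choice $w_1\in W_1,\dots,w_\Delta\in W_\Delta$ there is an index $1\le j\le k$ such that the number of $w_i$ with a $2$ at position $j$ is strictly greater than the number of $w_i$ with a $0$ at position $j$, and at most $k$ of the $w_i$ have a $0$ at position $j$; and (B) the multiset is maximal with property (A): adding any new trit sequence of length $k$ to any single $W_i$ yields a multiset violating (A). (This is the node-constraint of the problem obtained by applying one round of the simplified speedup transformation to superweak $k$-coloring.) *)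

theory Defs
  imports Main "HOL-Library.Multiset"
begin

datatype trit = T0 | T1 | T2

definition trit_seqs :: "nat \<Rightarrow> trit list set" where
  "trit_seqs k = {w. length w = k}"

definition cnt_at :: "trit list multiset \<Rightarrow> nat \<Rightarrow> trit \<Rightarrow> nat" where
  "cnt_at C j a = size (filter_mset (\<lambda>w. w ! j = a) C)"

text \<open>Property (A): for every choice of one word from each (copy of each) set in the
  multiset M (a choice is a multiset C related elementwise to M by membership),
  there is a position j where the 2s strictly outnumber the 0s and at most k zeros occur.\<close>
definition propA :: "nat \<Rightarrow> trit list set multiset \<Rightarrow> bool" where
  "propA k M \<longleftrightarrow>
     (\<forall>C. rel_mset (\<lambda>w W. w \<in> W) C M \<longrightarrow>
        (\<exists>j<k. cnt_at C j T2 > cnt_at C j T0 \<and> cnt_at C j T0 \<le> k))"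

definition propB :: "nat \<Rightarrow> trit list set multiset \<Rightarrow> bool" where
  "propB k M \<longleftrightarrow>
     (\<forall>W w. W \<in># M \<longrightarrow> w \<in> trit_seqs k \<longrightarrow> w \<notin> W \<longrightarrow>
        \<not> propA k (M - {#W#} + {#insert w W#}))"

definition h1 :: "nat \<Rightarrow> nat \<Rightarrow> trit list set multiset set" where
  "h1 k \<Delta> = {M. size M = \<Delta> \<and> (\<forall>W\<in>#M. W \<subseteq> trit_seqs k) \<and> propA k M \<and> propB k M}"

end

theory Submission
  imports Defs
begin

text \<open>
  Write \<open>\<one>\<close> for the all-ones word. By maximality (B), for every member \<open>B\<close> of \<open>Q\<close> and
  every word \<open>w \<notin> B\<close> some choice for \<open>Q\<close> minus one copy of \<open>B\<close> turns bad when \<open>w\<close> is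
  added. If \<open>A\<close> is another member, exchanging \<open>w\<close> for an element of \<open>A\<close> gives back good
  choices for \<open>Q\<close>, so each element chosen for a further copy of \<open>A\<close> has a 2 (if \<open>w = \<one>\<close>,
  \<open>A = B\<close>) or a 0 (if \<open>w \<in> A\<close> and \<open>\<one> \<in> B\<close>) at one of the \<open>k\<close> positions where the bad
  choice has at most \<open>k + 1\<close> such letters. Hence a member without \<open>\<one>\<close>, and a member not
  contained in some member with \<open>\<one>\<close>, occurs at most \<open>k (k + 1)\<close> times. Since \<open>Q\<close> has at
  most \<open>2^(3^k)\<close> distinct members, some member \<open>P\<close> occurs more often; it contains \<open>\<one>\<close>, and
  of \<open>P\<close> and any other member one is not contained in the other, so all other members are
  light and together occur at most \<open>2^(3^k) k (k + 1) \<le> 2^(4^k)\<close> times.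
\<close>

abbreviation is_choice :: "trit list multiset \<Rightarrow> trit list set multiset \<Rightarrow> bool" where
  "is_choice C M \<equiv> rel_mset (\<lambda>w W. w \<in> W) C M"

definition good_choice :: "nat \<Rightarrow> trit list multiset \<Rightarrow> bool" where
  "good_choice k C \<longleftrightarrow> (\<exists>j<k. cnt_at C j T0 < cnt_at C j T2 \<and> cnt_at C j T0 \<le> k)"

lemma propA_iff_good_choice: "propA k M \<longleftrightarrow> (\<forall>C. is_choice C M \<longrightarrow> good_choice k C)"
  by (simp add: propA_def good_choice_def)

lemma cnt_at_add_mset: "cnt_at (add_mset w C) j a = cnt_at C j a + (if w ! j = a then 1 else 0)"
  by (simp add: cnt_at_def)

lemma good_choice_add_all_ones:
  "good_choice k (add_mset (replicate k T1) C) \<longleftrightarrow> good_choice k C"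
  by (auto simp: good_choice_def cnt_at_add_mset)

lemma good_choice_gained:
  assumes "\<not> good_choice k C" and "good_choice k (add_mset x C)"
  shows "\<exists>j<k. x ! j = T2 \<and> cnt_at C j T2 \<le> k"
proof -
  obtain j where j: "j < k" "cnt_at (add_mset x C) j T0 < cnt_at (add_mset x C) j T2"
    "cnt_at (add_mset x C) j T0 \<le> k"
    using assms(2) by (auto simp: good_choice_def)
  moreover have "\<not> (cnt_at C j T0 < cnt_at C j T2 \<and> cnt_at C j T0 \<le> k)"
    using assms(1) j(1) by (auto simp: good_choice_def)
  ultimately show ?thesis
    by (cases "x ! j") (auto simp: cnt_at_add_mset)
qed

lemma good_choice_lost:
  assumes "good_choice k C" and "\<not> good_choice k (add_mset x C)"
  shows "\<exists>j<k. x ! j = T0 \<and> cnt_at (add_mset x C) j T0 \<le> k + 1"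
proof -
  obtain j where j: "j < k" "cnt_at C j T0 < cnt_at C j T2" "cnt_at C j T0 \<le> k"
    using assms(1) by (auto simp: good_choice_def)
  moreover have "\<not> (cnt_at (add_mset x C) j T0 < cnt_at (add_mset x C) j T2 \<and>
      cnt_at (add_mset x C) j T0 \<le> k)"
    using assms(2) j(1) by (auto simp: good_choice_def)
  ultimately show ?thesis
    by (cases "x ! j") (auto simp: cnt_at_add_mset)
qed

lemma rel_mset_add_mset_Diff:
  assumes "R x X" and "X \<in># M" and "rel_mset R C (M - {#X#})"
  shows "rel_mset R (add_mset x C) M"
  using rel_mset_Plus[OF assms(1,3)] assms(2) by simp

lemma rel_mset_fiber:
  assumes "rel_mset R C M"
  obtains D where "D \<subseteq># C" and "size D = count M X"
    and "\<And>x. x \<in># D \<Longrightarrow> R x X \<and> rel_mset R (C - {#x#}) (M - {#X#})"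
proof -
  obtain Z where Z: "set_mset Z \<subseteq> {(x, y). R x y}" "image_mset fst Z = C" "image_mset snd Z = M"
    using assms unfolding multiset.in_rel by blast
  define ZX where "ZX = filter_mset (\<lambda>p. snd p = X) Z"
  show thesis
  proof
    show "image_mset fst ZX \<subseteq># C"
      unfolding ZX_def Z(2)[symmetric] by (intro image_mset_subseteq_mono multiset_filter_subset)
    show "size (image_mset fst ZX) = count M X"
      unfolding ZX_def Z(3)[symmetric] count_conv_size_mset filter_mset_image_mset by simp
  next
    fix x assume "x \<in># image_mset fst ZX"
    then obtain p where p: "p \<in># Z" "p = (x, X)"
      unfolding ZX_def by auto
    have "R x X"
      using p Z(1) by auto
    moreover have "rel_mset R (C - {#x#}) (M - {#X#})"
      unfolding multiset.in_rel mem_Collect_eq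
    proof (intro exI conjI)
      show "set_mset (Z - {#p#}) \<subseteq> {(x, y). R x y}"
        using Z(1) by (meson in_diffD subset_iff)
      show "image_mset fst (Z - {#p#}) = C - {#x#}" "image_mset snd (Z - {#p#}) = M - {#X#}"
        using p Z(2,3) by (simp_all add: image_mset_Diff)
    qed
    ultimately show "R x X \<and> rel_mset R (C - {#x#}) (M - {#X#})" ..
  qed
qed

lemma size_le_sum_filter_mset:
  assumes "finite J" and "\<And>x. x \<in># D \<Longrightarrow> \<exists>j\<in>J. P j x"
  shows "size D \<le> (\<Sum>j\<in>J. size (filter_mset (P j) D))"
  using assms(2)
proof (induction D)
  case empty
  then show ?case by simp
next
  case (add x D)
  then obtain j0 where "j0 \<in> J" "P j0 x"
    by auto
  then have "1 \<le> card (J \<inter> {j. P j x})"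
    using assms(1) by (simp add: Suc_le_eq card_gt_0_iff) blast
  moreover have "(\<Sum>j\<in>J. size (filter_mset (P j) (add_mset x D))) =
      (\<Sum>j\<in>J. size (filter_mset (P j) D) + of_bool (P j x))"
    by (intro sum.cong) auto
  moreover have "\<dots> = (\<Sum>j\<in>J. size (filter_mset (P j) D)) + card (J \<inter> {j. P j x})"
    using assms(1) by (simp add: sum.distrib)
  ultimately show ?case
    using add by simp
qed

lemma size_le_mult_if_rare_position:
  assumes "D \<subseteq># C" and "\<And>x. x \<in># D \<Longrightarrow> \<exists>j<k. x ! j = a \<and> cnt_at C j a \<le> b"
  shows "size D \<le> k * b"
proof -
  let ?J = "{j. j < k \<and> cnt_at C j a \<le> b}"
  have "size D \<le> (\<Sum>j\<in>?J. size (filter_mset (\<lambda>x. x ! j = a) D))"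
    by (rule size_le_sum_filter_mset) (use assms(2) in auto)
  also have "\<dots> \<le> (\<Sum>j\<in>?J. cnt_at C j a)"
    unfolding cnt_at_def
    by (intro sum_mono size_mset_mono multiset_filter_mono assms(1))
  also have "\<dots> \<le> card ?J * b"
    using sum_bounded_above[of ?J "\<lambda>j. cnt_at C j a" b] by simp
  also have "\<dots> \<le> k * b"
    using card_mono[of "{..<k}" ?J] by (intro mult_le_mono1) auto
  finally show ?thesis .
qed

lemma replicate_in_trit_seqs: "replicate k a \<in> trit_seqs k"
  by (simp add: trit_seqs_def)

lemma h1_choice_good:
  assumes "Q \<in> h1 k \<Delta>" and "is_choice C Q"
  shows "good_choice k C"
  using assms by (simp add: h1_def propA_iff_good_choice)

text \<open>Maximality (B): enlarging \<open>B\<close> by \<open>w\<close> admits a bad choice, which must pick \<open>w\<close>.\<close>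

lemma h1_maximality_choice:
  assumes Q: "Q \<in> h1 k \<Delta>" and "B \<in># Q" and "w \<in> trit_seqs k" and "w \<notin> B"
  obtains C where "is_choice C (Q - {#B#})" and "\<not> good_choice k (add_mset w C)"
proof -
  have "\<not> propA k (add_mset (insert w B) (Q - {#B#}))"
    using Q assms(2-4) unfolding h1_def propB_def by auto
  then obtain C' where C': "is_choice C' (add_mset (insert w B) (Q - {#B#}))"
    "\<not> good_choice k C'"
    unfolding propA_iff_good_choice by blast
  then obtain a C where C: "C' = add_mset a C" "a \<in> insert w B" "is_choice C (Q - {#B#})"
    using msed_rel_invR[OF C'(1)] by blast
  have "a \<notin> B"
  proof
    assume "a \<in> B"
    then have "is_choice C' Q"
      using rel_mset_add_mset_Diff[of _ a B] C \<open>B \<in># Q\<close> by simp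
    then show False
      using h1_choice_good[OF Q] C'(2) by blast
  qed
  then show thesis
    using that C C'(2) by simp
qed

lemma count_le_if_all_ones_notin:
  assumes Q: "Q \<in> h1 k \<Delta>" and "X \<in># Q" and "replicate k T1 \<notin> X"
  shows "count Q X \<le> k * k + 1"
proof -
  obtain C where C: "is_choice C (Q - {#X#})" "\<not> good_choice k (add_mset (replicate k T1) C)"
    using h1_maximality_choice[OF Q \<open>X \<in># Q\<close> replicate_in_trit_seqs assms(3)] .
  then have bad: "\<not> good_choice k C"
    by (simp add: good_choice_add_all_ones)
  obtain D where D: "D \<subseteq># C" "size D = count (Q - {#X#}) X" "\<And>x. x \<in># D \<Longrightarrow> x \<in> X"
    by (rule rel_mset_fiber[OF C(1), of X]) blast+
  have "size D \<le> k * k"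
  proof (rule size_le_mult_if_rare_position[OF D(1)])
    fix x assume "x \<in># D"
    then have "is_choice (add_mset x C) Q"
      using rel_mset_add_mset_Diff[OF D(3) \<open>X \<in># Q\<close> C(1)] by simp
    then show "\<exists>j<k. x ! j = T2 \<and> cnt_at C j T2 \<le> k"
      by (intro good_choice_gained[OF bad] h1_choice_good[OF Q])
  qed
  then show ?thesis
    using D(2) by simp
qed

lemma count_le_if_not_subset:
  assumes Q: "Q \<in> h1 k \<Delta>" and "A \<in># Q" and "B \<in># Q"
    and "\<not> A \<subseteq> B" and "replicate k T1 \<in> B"
  shows "count Q A \<le> k * (k + 1)"
proof -
  obtain a where a: "a \<in> A" "a \<notin> B"
    using assms(4) by blast
  have "a \<in> trit_seqs k"
    using Q \<open>A \<in># Q\<close> a(1) by (auto simp: h1_def)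
  then obtain C where C: "is_choice C (Q - {#B#})" "\<not> good_choice k (add_mset a C)"
    using h1_maximality_choice[OF Q \<open>B \<in># Q\<close>] a(2) by blast
  have "A \<noteq> B"
    using assms(4) by blast
  then have A_rest: "A \<in># Q - {#B#}"
    using \<open>A \<in># Q\<close> by (simp add: in_diff_count)
  obtain D where D: "D \<subseteq># C" "size D = count (Q - {#B#}) A"
    "\<And>x. x \<in># D \<Longrightarrow> x \<in> A \<and> is_choice (C - {#x#}) (Q - {#B#} - {#A#})"
    by (rule rel_mset_fiber[OF C(1), of A]) blast+
  have "size D \<le> k * (k + 1)"
  proof (rule size_le_mult_if_rare_position)
    show "D \<subseteq># add_mset a C"
      using D(1) by (simp add: subset_mset.order_trans)
    fix x assume x: "x \<in># D"
    \<comment> \<open>exchanging \<open>x\<close> for \<open>a\<close> and choosing \<open>\<one>\<close> for \<open>B\<close> gives a choice for \<open>Q\<close>\<close>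
    let ?E = "add_mset a (C - {#x#})"
    have "is_choice ?E (Q - {#B#})"
      using rel_mset_add_mset_Diff[of _ a A] a(1) A_rest D(3)[OF x] by simp
    then have "is_choice (add_mset (replicate k T1) ?E) Q"
      by (rule rel_mset_add_mset_Diff[where R = "\<lambda>w W. w \<in> W", OF assms(5,3)])
    then have "good_choice k ?E"
      using h1_choice_good[OF Q] good_choice_add_all_ones by blast
    moreover have E_eq: "add_mset x ?E = add_mset a C"
      using x D(1) by (simp add: mset_subset_eqD)
    ultimately show "\<exists>j<k. x ! j = T0 \<and> cnt_at (add_mset a C) j T0 \<le> k + 1"
      using good_choice_lost[of k ?E x] C(2) unfolding E_eq by blast
  qed
  then show ?thesis
    using D(2) \<open>A \<noteq> B\<close> by simp
qed

lemma all_ones_mem_if_heavy: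
  assumes Q: "Q \<in> h1 k \<Delta>" and "0 < k" and "P \<in># Q" and "k * (k + 1) < count Q P"
  shows "replicate k T1 \<in> P"
proof (rule ccontr)
  assume "replicate k T1 \<notin> P"
  then have "count Q P \<le> k * k + 1"
    by (rule count_le_if_all_ones_notin[OF Q \<open>P \<in># Q\<close>])
  with assms(2,4) show False
    by simp
qed

lemma count_le_if_ne_heavy:
  assumes Q: "Q \<in> h1 k \<Delta>" and "0 < k" and "P \<in># Q" and heavy: "k * (k + 1) < count Q P"
    and "A \<in># Q" and "A \<noteq> P"
  shows "count Q A \<le> k * (k + 1)"
proof (cases "replicate k T1 \<in> A")
  case False
  then have "count Q A \<le> k * k + 1"
    by (rule count_le_if_all_ones_notin[OF Q \<open>A \<in># Q\<close>])
  with \<open>0 < k\<close> show ?thesis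
    by simp
next
  case True
  consider "\<not> A \<subseteq> P" | "\<not> P \<subseteq> A"
    using \<open>A \<noteq> P\<close> by blast
  then show ?thesis
  proof cases
    case 1
    then show ?thesis
      by (rule count_le_if_not_subset[OF Q \<open>A \<in># Q\<close> \<open>P \<in># Q\<close> _
            all_ones_mem_if_heavy[OF Q assms(2-4)]])
  next
    case 2
    then have "count Q P \<le> k * (k + 1)"
      by (rule count_le_if_not_subset[OF Q \<open>P \<in># Q\<close> \<open>A \<in># Q\<close> _ True])
    with heavy show ?thesis
      by simp
  qed
qed

lemma size_mset_le_count_add_card_mult:
  assumes "\<And>A. A \<in># M \<Longrightarrow> A \<noteq> P \<Longrightarrow> count M A \<le> b"
  shows "size M \<le> count M P + card (set_mset M) * b"
proof -
  have "size M = (\<Sum>A\<in>set_mset M. count M A)"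
    by (rule size_multiset_overloaded_eq)
  also have "\<dots> \<le> (\<Sum>A\<in>set_mset M. (if A = P then count M P else 0) + b)"
    using assms by (intro sum_mono) auto
  also have "\<dots> \<le> count M P + card (set_mset M) * b"
    by (simp add: sum.distrib sum.delta)
  finally show ?thesis .
qed

lemma exists_count_gt:
  assumes "b + card (set_mset M) * b < size M"
  shows "\<exists>P. P \<in># M \<and> b < count M P"
proof (rule ccontr)
  assume no_heavy: "\<nexists>P. P \<in># M \<and> b < count M P"
  then have "count M A \<le> b" for A
    by (metis leI le0 not_in_iff)
  then have "size M \<le> b + card (set_mset M) * b"
    using size_mset_le_count_add_card_mult[of M undefined b] by (meson add_le_mono1 le_trans)
  with assms show False
    by simp
qed

lemma card_trit_seqs: "card (trit_seqs k) = 3 ^ k"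
proof -
  have "(UNIV :: trit set) = {T0, T1, T2}"
    using trit.exhaust by blast
  then have "trit_seqs k = {xs. set xs \<subseteq> {T0, T1, T2} \<and> length xs = k}"
    by (simp add: trit_seqs_def)
  then show ?thesis
    by (simp add: card_lists_length_eq numeral_3_eq_3)
qed

lemma card_set_mset_h1_le:
  assumes "Q \<in> h1 k \<Delta>"
  shows "card (set_mset Q) \<le> 2 ^ 3 ^ k"
proof -
  have "set_mset Q \<subseteq> Pow (trit_seqs k)"
    using assms by (auto simp: h1_def)
  moreover have "finite (trit_seqs k)"
    using card_trit_seqs by (metis card_ge_0_finite zero_less_numeral zero_less_power)
  ultimately show ?thesis
    using card_mono[of "Pow (trit_seqs k)" "set_mset Q"] by (simp add: card_Pow card_trit_seqs)
qed

lemma three_pow_add_le_four_pow: "2 \<le> k \<Longrightarrow> 3 ^ k + 2 * k \<le> (4::nat) ^ k"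
proof (induction k rule: nat_induct_at_least)
  case base
  then show ?case by simp
next
  case (Suc n)
  have "(1::nat) \<le> 3 ^ n"
    by simp
  then show ?case
    using Suc by simp
qed

lemma two_pow_three_pow_mult_le:
  assumes "2 \<le> k"
  shows "2 ^ 3 ^ k * (k * (k + 1)) \<le> (2::nat) ^ 4 ^ k"
proof -
  have "k * (k + 1) \<le> 2 ^ k * 2 ^ k"
    using less_exp[of k] by (intro mult_mono) (auto simp: Suc_le_eq)
  then have "2 ^ 3 ^ k * (k * (k + 1)) \<le> (2::nat) ^ (3 ^ k + 2 * k)"
    by (simp add: power_add mult_2)
  also have "\<dots> \<le> 2 ^ 4 ^ k"
    using three_pow_add_le_four_pow[OF assms] by (intro power_increasing) auto
  finally show ?thesis .
qed

lemma card_set_mset_h1_mult_le: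
  assumes "2 \<le> k" and "Q \<in> h1 k \<Delta>"
  shows "card (set_mset Q) * (k * (k + 1)) \<le> 2 ^ 4 ^ k"
  using mult_le_mono1[OF card_set_mset_h1_le[OF assms(2)]] two_pow_three_pow_mult_le[OF assms(1)]
  by (rule le_trans)

lemma double_mult_le_two_pow_four_pow:
  assumes "2 \<le> k"
  shows "2 * (k * (k + 1)) \<le> (2::nat) ^ 4 ^ k"
proof -
  have two_le: "(2::nat) \<le> 2 ^ 3 ^ k"
    using power_increasing[of 1 "3 ^ k" "2::nat"] by simp
  show ?thesis
    using mult_le_mono1[OF two_le] two_pow_three_pow_mult_le[OF assms] by (rule le_trans)
qed

theorem lemma5:
  fixes k \<Delta> :: nat and Q :: "trit list set multiset"
  assumes "k \<ge> 2" and "\<Delta> \<ge> 2 ^ (4 ^ k + 1)" and "Q \<in> h1 k \<Delta>"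
  shows "\<exists>!P. P \<in># Q \<and> count Q P \<ge> \<Delta> - 2 ^ (4 ^ k) \<and> replicate k T1 \<in> P"
proof -
  note Q = assms(3)
  let ?b = "k * (k + 1)"
  have k: "0 < k"
    using assms(1) by simp
  have size_Q: "size Q = \<Delta>"
    using Q by (simp add: h1_def)
  note light_total = card_set_mset_h1_mult_le[OF assms(1) Q]
  have b_lt: "?b + 2 ^ 4 ^ k < \<Delta>"
    using double_mult_le_two_pow_four_pow[OF assms(1)] assms(2) k by simp
  obtain P where P: "P \<in># Q" "?b < count Q P"
    using exists_count_gt[of ?b Q] size_Q light_total b_lt by auto
  have light: "count Q A \<le> ?b" if "A \<in># Q" "A \<noteq> P" for A
    using count_le_if_ne_heavy[OF Q k P that] .
  show ?thesis
  proof (rule ex1I[of _ P], intro conjI)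
    show "\<Delta> - 2 ^ 4 ^ k \<le> count Q P"
      using size_mset_le_count_add_card_mult[of Q P ?b, OF light] size_Q light_total by linarith
    show "replicate k T1 \<in> P"
      by (rule all_ones_mem_if_heavy[OF Q k P])
  next
    fix P' assume P': "P' \<in># Q \<and> \<Delta> - 2 ^ 4 ^ k \<le> count Q P' \<and> replicate k T1 \<in> P'"
    then show "P' = P"
      using light[of P'] b_lt by linarith
  qed (rule P(1))
qed

end
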